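(* Let $\beta\in\mathbb{R}\setminus\{0\}$ and let the finite-horizon MDP, the deterministic policy $\mu_\theta$, the soft value functions $V_t,Q_t$, the objective $J^\beta(\mu_\theta)$ and the twisted state densities $\rho^*_t$ be as in the context, under the regularity assumptions (D1)–(D3). Then $$\nabla_\theta J^\beta(\mu_\theta)=\sum_{t=1}^T\int_{\mathcal S}\rho^*_t(s)\,\nabla_\theta\mu_\theta(s)\,\nabla_a Q_t(s,a)\big|_{a=\mu_\theta(s)}\,\mathrm{d}s,$$ where $\nabla_\theta\mu_\theta(s)\in\mathbb{R}^{n\times m}$ is the (transposed) Jacobian of $\theta\mapsto\mu_\theta(s)$. (With $\rho^*_\mu:=\sum_t\rho^*_t$, this is the formula $\int_{\mathcal S}\rho^*_\mu(s)\nabla_\theta\mu_\theta(s)\nabla_aQ(s,a)|_{a=\mu_\theta(s)}ds$ with $Q$ taken at the corresponding time step.)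
   Context: Finite-horizon MDP with horizon $T$: state space $\mathcal S\subset\mathbb{R}^d$ compact, action space $\mathcal A=\mathbb{R}^m$, initial density $p_1(s)$, transition density $p(s'|s,a)$, reward $r(s,a)$. Deterministic policy $\mu_\theta:\mathcal S\to\mathbb{R}^m$, $\theta\in\mathbb{R}^n$. Trajectories: $s_1\sim p_1$, $a_t=\mu_\theta(s_t)$, $s_{t+1}\sim p(\cdot|s_t,a_t)$, $r_t=r(s_t,a_t)$. Objective: $J^\beta(\mu_\theta)=\frac1\beta\log\mathbb{E}[e^{\beta\sum_{t=1}^T r_t}]$. Soft value functions: $V_{T+1}\equiv0$; for $t=T,\dots,1$: $Q_t(s,a)=r(s,a)+\frac1\beta\log\int_{\mathcal S}p(s'|s,a)e^{\beta V_{t+1}(s')}ds'$ (defined for all $a\in\mathbb{R}^m$) and $V_t(s)=Q_t(s,\mu_\theta(s))$; thus $J^\beta(\mu_\theta)=\frac1\beta\log\int p_1(s)e^{\beta V_1(s)}ds$. Twisted quantities: $p_1^*(s)\propto p_1(s)e^{\beta V_1(s)}$; $p^*_t(s'|s,a)\propto p(s'|s,a)e^{\beta V_{t+1}(s')}$. $\rho^*_t$ is the marginal density of $s_t$ for the process $s_1\sim p_1^*$, $a_k=\mu_\theta(s_k)$, $s_{k+1}\sim p^*_k(\cdot|s_k,a_k)$. Regularity assumptions: (D1) $p(s'|s,a)$, $\nabla_ap(s'|s,a)$, $\mu_\theta(s)$, $\nabla_\theta\mu_\theta(s)$, $r(s,a)$, $\nabla_ar(s,a)$, $p_1(s)$ are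 continuous in $s,a,s',\theta$; (D2) there are $b,L$ with $\sup_sp_1(s)<b$, $\sup_{s,a,s'}p(s'|s,a)<b$, $\sup_{s,a}|r(s,a)|<b$, $\sup_{s,a,s'}\|\nabla_ap(s'|s,a)\|<L$, $\sup_{s,a}\|\nabla_ar(s,a)\|<L$; (D3) $\mathcal A=\mathbb{R}^m$ and $\mathcal S$ is compact. *)

theory Defs
  imports "HOL-Analysis.Analysis"
begin

text \<open>State space S (a subset of a Euclidean
space), transition density p s a s' = p(s'|s,a), reward r s a, deterministic
policy mu :: state => action (the policy for a fixed parameter).\<close>

text \<open>Soft value function indexed by the number k of remaining steps:
  Vtg k = V_{T+1-k};  Vtg 0 = 0.\<close>
fun Vtg :: "real \<Rightarrow> 's::euclidean_space set \<Rightarrow> ('s \<Rightarrow> 'a \<Rightarrow> 's \<Rightarrow> real)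
            \<Rightarrow> ('s \<Rightarrow> 'a \<Rightarrow> real) \<Rightarrow> ('s \<Rightarrow> 'a) \<Rightarrow> nat \<Rightarrow> 's \<Rightarrow> real" where
  "Vtg \<beta> S p r \<mu> 0 s = 0"
| "Vtg \<beta> S p r \<mu> (Suc k) s =
     r s (\<mu> s) + (1 / \<beta>) * ln (LINT s':S|lborel. p s (\<mu> s) s' * exp (\<beta> * Vtg \<beta> S p r \<mu> k s'))"

definition Vsoft :: "real \<Rightarrow> 's::euclidean_space set \<Rightarrow> ('s \<Rightarrow> 'a \<Rightarrow> 's \<Rightarrow> real)
            \<Rightarrow> ('s \<Rightarrow> 'a \<Rightarrow> real) \<Rightarrow> ('s \<Rightarrow> 'a) \<Rightarrow> nat \<Rightarrow> nat \<Rightarrow> 's \<Rightarrow> real" where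
  "Vsoft \<beta> S p r \<mu> T t = Vtg \<beta> S p r \<mu> (T + 1 - t)"

definition Qsoft :: "real \<Rightarrow> 's::euclidean_space set \<Rightarrow> ('s \<Rightarrow> 'a \<Rightarrow> 's \<Rightarrow> real)
            \<Rightarrow> ('s \<Rightarrow> 'a \<Rightarrow> real) \<Rightarrow> ('s \<Rightarrow> 'a) \<Rightarrow> nat \<Rightarrow> nat \<Rightarrow> 's \<Rightarrow> 'a \<Rightarrow> real" where
  "Qsoft \<beta> S p r \<mu> T t s a =
     r s a + (1 / \<beta>) * ln (LINT s':S|lborel. p s a s' * exp (\<beta> * Vsoft \<beta> S p r \<mu> T (t + 1) s'))"

definition Jbeta :: "real \<Rightarrow> 's::euclidean_space set \<Rightarrow> ('s \<Rightarrow> real) \<Rightarrow> ('s \<Rightarrow> 'a \<Rightarrow> 's \<Rightarrow> real)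
            \<Rightarrow> ('s \<Rightarrow> 'a \<Rightarrow> real) \<Rightarrow> ('s \<Rightarrow> 'a) \<Rightarrow> nat \<Rightarrow> real" where
  "Jbeta \<beta> S p1 p r \<mu> T =
     (1 / \<beta>) * ln (LINT s:S|lborel. p1 s * exp (\<beta> * Vsoft \<beta> S p r \<mu> T 1 s))"

definition ptw :: "real \<Rightarrow> 's::euclidean_space set \<Rightarrow> ('s \<Rightarrow> 'a \<Rightarrow> 's \<Rightarrow> real)
            \<Rightarrow> ('s \<Rightarrow> 'a \<Rightarrow> real) \<Rightarrow> ('s \<Rightarrow> 'a) \<Rightarrow> nat \<Rightarrow> nat \<Rightarrow> 's \<Rightarrow> 'a \<Rightarrow> 's \<Rightarrow> real" where
  "ptw \<beta> S p r \<mu> T t s a s' =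
     p s a s' * exp (\<beta> * Vsoft \<beta> S p r \<mu> T (t + 1) s')
     / (LINT s'':S|lborel. p s a s'' * exp (\<beta> * Vsoft \<beta> S p r \<mu> T (t + 1) s''))"

text \<open>Marginal densities of the twisted process, indexed by k = t - 1:
  rho_aux 0 = p_1^*, and rho_aux (k+1)(s') = int rho_aux k (s) p*_{k+1}(s'|s,mu(s)) ds.\<close>
fun rho_aux :: "real \<Rightarrow> 's::euclidean_space set \<Rightarrow> ('s \<Rightarrow> real) \<Rightarrow> ('s \<Rightarrow> 'a \<Rightarrow> 's \<Rightarrow> real)
            \<Rightarrow> ('s \<Rightarrow> 'a \<Rightarrow> real) \<Rightarrow> ('s \<Rightarrow> 'a) \<Rightarrow> nat \<Rightarrow> nat \<Rightarrow> 's \<Rightarrow> real" where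
  "rho_aux \<beta> S p1 p r \<mu> T 0 s =
     p1 s * exp (\<beta> * Vsoft \<beta> S p r \<mu> T 1 s)
     / (LINT s'':S|lborel. p1 s'' * exp (\<beta> * Vsoft \<beta> S p r \<mu> T 1 s''))"
| "rho_aux \<beta> S p1 p r \<mu> T (Suc k) s' =
     (LINT s:S|lborel. rho_aux \<beta> S p1 p r \<mu> T k s * ptw \<beta> S p r \<mu> T (Suc k) s (\<mu> s) s')"

definition rho_star :: "real \<Rightarrow> 's::euclidean_space set \<Rightarrow> ('s \<Rightarrow> real) \<Rightarrow> ('s \<Rightarrow> 'a \<Rightarrow> 's \<Rightarrow> real)
            \<Rightarrow> ('s \<Rightarrow> 'a \<Rightarrow> real) \<Rightarrow> ('s \<Rightarrow> 'a) \<Rightarrow> nat \<Rightarrow> nat \<Rightarrow> 's \<Rightarrow> real" where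
  "rho_star \<beta> S p1 p r \<mu> T t = rho_aux \<beta> S p1 p r \<mu> T (t - 1)"

end

theory Submission
  imports Defs
begin

(* With Z(s,a) = int p(s'|s,a) exp(beta V_{t+1}(s')) ds' we have Q_t = r + (1/beta) log Z and
   V_t(s) = Q_t(s, mu_theta(s)). Since S is compact and every integrand is jointly continuous,
   one may differentiate under the integral sign, and the derivative of log Z in theta is the
   mean of grad V_{t+1} under the twisted kernel p*_t. By backward induction this gives
   grad V_t(s) = grad mu_theta(s) grad_a Q_t(s, mu_theta(s)) + E_{p*_t(.|s,mu_theta(s))} grad V_{t+1},
   and likewise grad J = E_{p_1^*} grad V_1. Unrolling the recursion, with Fubini moving each
   twisted expectation onto the state density, turns E_{p_1^*} grad V_1 into the sum over t of
   the rho*_t-means of grad mu_theta grad_a Q_t. *)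

lemma continuous_on_compose_pair:
  fixes F :: "'a::topological_space \<Rightarrow> 'b::topological_space \<Rightarrow> 'c::topological_space"
  assumes F: "continuous_on (A \<times> B) (\<lambda>(x, y). F x y)"
    and "continuous_on X f" "continuous_on X g" "f ` X \<subseteq> A" "g ` X \<subseteq> B"
  shows "continuous_on X (\<lambda>z. F (f z) (g z))"
  using continuous_on_compose2[OF F, of X "\<lambda>z. (f z, g z)"] assms(2-)
  by (auto intro!: continuous_on_Pair)

lemma continuous_on_matrix_vector_mult [continuous_intros]:
  fixes A :: "'a::topological_space \<Rightarrow> real^'n^'m" and x :: "'a \<Rightarrow> real^'n"
  assumes "continuous_on X A" "continuous_on X x"
  shows "continuous_on X (\<lambda>z. A z *v x z)"
  unfolding matrix_vector_mult_def by (intro continuous_intros assms)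

lemma continuous_on_vector_matrix_mult [continuous_intros]:
  fixes x :: "'a::topological_space \<Rightarrow> real^'m" and A :: "'a \<Rightarrow> real^'n^'m"
  assumes "continuous_on X x" "continuous_on X A"
  shows "continuous_on X (\<lambda>z. x z v* A z)"
  unfolding vector_matrix_mult_def by (intro continuous_intros assms)

lemma continuous_on_prod_compact_uniform:
  fixes F :: "'a::metric_space \<Rightarrow> 'b::topological_space \<Rightarrow> 'c::metric_space"
  assumes F: "continuous_on (X \<times> S) (\<lambda>(x, s). F x s)" and S: "compact S"
    and x0: "x0 \<in> X" and e: "0 < e"
  obtains d where "0 < d" "\<And>x s. x \<in> X \<Longrightarrow> dist x x0 < d \<Longrightarrow> s \<in> S \<Longrightarrow> dist (F x s) (F x0 s) \<le> e"
proof -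
  obtain U where U: "x0 \<in> U" "open U"
    and close: "\<forall>x\<in>U \<inter> X. \<forall>s\<in>S. dist ((\<lambda>(x, s). F x s) (x, s)) ((\<lambda>(x, s). F x s) (x0, s)) \<le> e"
    using continuous_on_prod_compactE[OF F S x0 e] by blast
  obtain d where "0 < d" "ball x0 d \<subseteq> U"
    using U open_contains_ball by blast
  with close show ?thesis
    by (intro that[of d]) (auto simp: dist_commute subset_iff)
qed

lemma set_integrable_continuous_on_compact:
  fixes f :: "'s::euclidean_space \<Rightarrow> 'c::{banach,second_countable_topology}"
  assumes "compact S" "continuous_on S f"
  shows "set_integrable lborel S f"
  unfolding set_integrable_def using borel_integrable_compact[OF assms] .

lemma norm_set_integral_le_measure:
  fixes f :: "'s::euclidean_space \<Rightarrow> 'c::{banach,second_countable_topology}"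
  assumes S: "compact S" and f: "continuous_on S f" and bound: "\<And>s. s \<in> S \<Longrightarrow> norm (f s) \<le> e"
  shows "norm (LINT s:S|lborel. f s) \<le> e * measure lborel S"
proof -
  have "norm (LINT s:S|lborel. f s) \<le> (LINT s|lborel. indicator S s *\<^sub>R e)"
    unfolding set_lebesgue_integral_def
    by (rule Bochner_Integration.integral_norm_bound_integral
        [OF borel_integrable_compact[OF S f] borel_integrable_compact[OF S continuous_on_const]])
       (auto simp: bound split: split_indicator)
  then show ?thesis
    by (simp add: mult.commute)
qed

lemma set_integral_inner_left:
  fixes f :: "'s::euclidean_space \<Rightarrow> 'c::euclidean_space"
  assumes "set_integrable lborel S f"
  shows "(LINT s:S|lborel. f s \<bullet> h) = (LINT s:S|lborel. f s) \<bullet> h"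
  using assms unfolding set_lebesgue_integral_def set_integrable_def
  by (subst integral_inner_left[symmetric]) auto

lemma continuous_on_set_integral_param:
  fixes F :: "'a::metric_space \<Rightarrow> 's::euclidean_space \<Rightarrow> 'c::{banach,second_countable_topology}"
  assumes S: "compact S" and F: "continuous_on (X \<times> S) (\<lambda>(x, s). F x s)"
  shows "continuous_on X (\<lambda>x. LINT s:S|lborel. F x s)"
  unfolding continuous_on_iff
proof (intro ballI allI impI)
  fix x0 and e :: real
  assume x0: "x0 \<in> X" and e: "0 < e"
  define m where "m = measure lborel S"
  define e' where "e' = e / (m + 1)"
  have m: "0 \<le> m"
    unfolding m_def by (rule measure_nonneg)
  have e': "0 < e'" "e' * m < e"
    using e m by (auto simp: e'_def field_simps)
  obtain d where d: "0 < d" and close: "\<And>x s. x \<in> X \<Longrightarrow> dist x x0 < d \<Longrightarrow> s \<in> S \<Longrightarrow> dist (F x s) (F x0 s) \<le> e'"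
    using continuous_on_prod_compact_uniform[OF F S x0 e'(1)] by blast
  have Fx: "continuous_on S (F x)" if "x \<in> X" for x
    using continuous_on_compose_pair[OF F, of S "\<lambda>_. x" "\<lambda>s. s"] that by auto
  have "dist (LINT s:S|lborel. F x s) (LINT s:S|lborel. F x0 s) < e" if x: "x \<in> X" "dist x x0 < d" for x
  proof -
    have "dist (LINT s:S|lborel. F x s) (LINT s:S|lborel. F x0 s) = norm (LINT s:S|lborel. F x s - F x0 s)"
      using x x0 by (simp add: dist_norm set_integral_diff set_integrable_continuous_on_compact S Fx)
    also have "\<dots> \<le> e' * m"
      unfolding m_def using close[OF x] x x0
      by (intro norm_set_integral_le_measure S) (auto intro!: continuous_intros Fx simp: dist_norm)
    finally show ?thesis
      using e' by linarith
  qed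
  with d show "\<exists>d>0. \<forall>x\<in>X. dist x x0 < d \<longrightarrow> dist (LINT s:S|lborel. F x s) (LINT s:S|lborel. F x0 s) < e"
    by blast
qed

lemma has_derivative_set_integral_param:
  fixes f :: "'a::euclidean_space \<Rightarrow> 's::euclidean_space \<Rightarrow> real" and g :: "'a \<Rightarrow> 's \<Rightarrow> 'a"
  assumes S: "compact S"
    and f_deriv: "\<And>x s. s \<in> S \<Longrightarrow> ((\<lambda>x. f x s) has_derivative (\<lambda>h. g x s \<bullet> h)) (at x)"
    and f_cont: "\<And>x. continuous_on S (f x)"
    and g_cont: "continuous_on (UNIV \<times> S) (\<lambda>(x, s). g x s)"
  shows "((\<lambda>x. LINT s:S|lborel. f x s) has_derivative (\<lambda>h. (LINT s:S|lborel. g x0 s) \<bullet> h)) (at x0)"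
  unfolding has_derivative_at_alt
proof (intro conjI allI impI bounded_linear_inner_right)
  fix e :: real
  assume e: "0 < e"
  define m where "m = measure lborel S"
  define e' where "e' = e / (m + 1)"
  have m: "0 \<le> m"
    unfolding m_def by (rule measure_nonneg)
  have e': "0 < e'" "e' * m \<le> e"
    using e m by (auto simp: e'_def field_simps)
  obtain d where d: "0 < d"
    and close: "\<And>x s. dist x x0 < d \<Longrightarrow> s \<in> S \<Longrightarrow> dist (g x s) (g x0 s) \<le> e'"
    using continuous_on_prod_compact_uniform[OF g_cont S UNIV_I e'(1)] by (metis UNIV_I)
  have g: "continuous_on S (g x)" for x
    using continuous_on_compose_pair[OF g_cont, of S "\<lambda>_. x" "\<lambda>s. s"] by auto
  have "norm ((LINT s:S|lborel. f y s) - (LINT s:S|lborel. f x0 s) - (LINT s:S|lborel. g x0 s) \<bullet> (y - x0))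
      \<le> e * norm (y - x0)" if y: "norm (y - x0) < d" for y
  proof -
    have linearization: "norm (f y s - f x0 s - g x0 s \<bullet> (y - x0)) \<le> norm (y - x0) * e'" if s: "s \<in> S" for s
    proof (rule differentiable_bound_linearization[where S="ball x0 d" and f'="\<lambda>x h. g x s \<bullet> h"])
      show "x0 + t *\<^sub>R (y - x0) \<in> ball x0 d" if "t \<in> {0..1}" for t
        using that y mult_left_le_one_le[of "norm (y - x0)" t]
        by (auto simp: dist_norm norm_minus_commute)
      show "((\<lambda>x. f x s) has_derivative (\<lambda>h. g x s \<bullet> h)) (at x within ball x0 d)" for x
        using f_deriv[OF s] by (rule has_derivative_at_withinI)
      show "onorm ((\<lambda>h. g x s \<bullet> h) - (\<lambda>h. g x0 s \<bullet> h)) \<le> e'" if "x \<in> ball x0 d" for x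
      proof -
        have "onorm ((\<lambda>h. g x s \<bullet> h) - (\<lambda>h. g x0 s \<bullet> h)) \<le> norm (g x s - g x0 s)"
          using onorm_inner_right[OF bounded_linear_ident, of "g x s - g x0 s"]
          by (simp add: fun_diff_def inner_diff_left onorm_id)
        also have "\<dots> \<le> e'"
          using close[of x s] that s by (simp add: dist_norm norm_minus_commute)
        finally show ?thesis .
      qed
    qed (use d in auto)
    have "(LINT s:S|lborel. f y s) - (LINT s:S|lborel. f x0 s) - (LINT s:S|lborel. g x0 s) \<bullet> (y - x0)
        = (LINT s:S|lborel. f y s - f x0 s - g x0 s \<bullet> (y - x0))"
    proof -
      have "set_integrable lborel S (f x)" "set_integrable lborel S (g x0)"
        "set_integrable lborel S (\<lambda>s. g x0 s \<bullet> (y - x0))" for x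
        by (auto intro!: set_integrable_continuous_on_compact S f_cont g continuous_intros)
      then show ?thesis
        by (simp add: set_integral_inner_left set_integral_diff)
    qed
    also have "norm \<dots> \<le> (norm (y - x0) * e') * m"
      unfolding m_def using linearization
      by (intro norm_set_integral_le_measure S) (auto intro!: continuous_intros f_cont g)
    also have "\<dots> \<le> e * norm (y - x0)"
      using e' mult_left_mono[OF e'(2) norm_ge_zero[of "y - x0"]] by (simp add: ac_simps)
    finally show ?thesis .
  qed
  with d show "\<exists>d>0. \<forall>y. norm (y - x0) < d \<longrightarrow>
      norm ((LINT s:S|lborel. f y s) - (LINT s:S|lborel. f x0 s) - (LINT s:S|lborel. g x0 s) \<bullet> (y - x0))
        \<le> e * norm (y - x0)"
    by blast
qed

lemma set_integral_swap_continuous: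
  fixes \<rho> d :: "'s::euclidean_space \<Rightarrow> real" and K :: "'s \<Rightarrow> 's \<Rightarrow> real"
  assumes S: "compact S" and \<rho>: "continuous_on S \<rho>" and d: "continuous_on S d"
    and K: "continuous_on (S \<times> S) (\<lambda>(s, s'). K s s')"
  shows "(LINT s:S|lborel. \<rho> s * (LINT s':S|lborel. K s s' * d s'))
       = (LINT s':S|lborel. (LINT s:S|lborel. \<rho> s * K s s') * d s')"
proof -
  define F where "F x y = indicator S x * indicator S y * (\<rho> x * K x y * d y)" for x y
  have "continuous_on (S \<times> S) (\<lambda>z. \<rho> (fst z) * (\<lambda>(s, s'). K s s') z * d (snd z))"
    by (intro continuous_intros continuous_on_compose2[OF \<rho>] continuous_on_compose2[OF d] K) auto
  then have "integrable lborel (\<lambda>z. indicator (S \<times> S) z *\<^sub>R (\<rho> (fst z) * (\<lambda>(s, s'). K s s') z * d (snd z)))"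
    by (intro borel_integrable_compact compact_Times S)
  moreover have "(\<lambda>z. indicator (S \<times> S) z *\<^sub>R (\<rho> (fst z) * (\<lambda>(s, s'). K s s') z * d (snd z))) = case_prod F"
    by (auto simp: F_def fun_eq_iff indicator_times)
  ultimately have F: "integrable (lborel \<Otimes>\<^sub>M lborel) (case_prod F)"
    unfolding lborel_prod by simp
  have "(LINT s:S|lborel. \<rho> s * (LINT s':S|lborel. K s s' * d s')) = (\<integral>x. (\<integral>y. F x y \<partial>lborel) \<partial>lborel)"
    unfolding set_lebesgue_integral_def F_def
    by (intro Bochner_Integration.integral_cong refl)
       (simp add: ac_simps flip: integral_mult_right_zero del: integral_mult_right_zero)
  also have "\<dots> = (\<integral>y. (\<integral>x. F x y \<partial>lborel) \<partial>lborel)"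
    by (rule lborel_pair.Fubini_integral[OF F, symmetric])
  also have "\<dots> = (LINT s':S|lborel. (LINT s:S|lborel. \<rho> s * K s s') * d s')"
    unfolding set_lebesgue_integral_def F_def
    by (intro Bochner_Integration.integral_cong refl)
       (simp add: ac_simps flip: integral_mult_right_zero integral_mult_left_zero
         del: integral_mult_right_zero integral_mult_left_zero)
  finally show ?thesis .
qed

lemma set_integral_density_pos:
  fixes q f :: "'s::euclidean_space \<Rightarrow> real"
  assumes S: "compact S" and q: "continuous_on S q" "\<forall>s\<in>S. 0 \<le> q s" "(LINT s:S|lborel. q s) = 1"
    and f: "continuous_on S f" "\<forall>s\<in>S. 0 < f s"
  shows "0 < (LINT s:S|lborel. q s * f s)"
proof -
  have "S \<noteq> {}"
    using q(3) by (auto simp: set_lebesgue_integral_def)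
  then obtain s0 where s0: "s0 \<in> S" "\<And>s. s \<in> S \<Longrightarrow> f s0 \<le> f s"
    using continuous_attains_inf[OF S _ f(1)] by blast
  have "f s0 = (LINT s:S|lborel. q s * f s0)"
    using q(3) by simp
  also have "\<dots> \<le> (LINT s:S|lborel. q s * f s)"
    using q s0 by (intro set_integral_mono set_integrable_continuous_on_compact S continuous_intros f)
       (auto intro: mult_left_mono)
  finally show ?thesis
    using f(2) s0(1) by fastforce
qed

lemma set_integral_Pair_continuous:
  fixes f :: "'s::euclidean_space \<Rightarrow> 'a::euclidean_space" and g :: "'s \<Rightarrow> 'b::euclidean_space"
  assumes S: "compact S" and "continuous_on S f" "continuous_on S g"
  shows "(LINT s:S|lborel. (f s, g s)) = (LINT s:S|lborel. f s, LINT s:S|lborel. g s)"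
proof -
  have "integrable lborel (\<lambda>s. indicator S s *\<^sub>R (f s, g s))"
    by (intro borel_integrable_compact S continuous_intros assms)
  then show ?thesis
    unfolding set_lebesgue_integral_def
    using integral_bounded_linear[OF bounded_linear_fst] integral_bounded_linear[OF bounded_linear_snd]
    by (intro prod_eqI) (fastforce+)
qed

locale risk_sensitive_mdp =
  fixes \<beta> :: real
    and S :: "'s::euclidean_space set"
    and p1 :: "'s \<Rightarrow> real"
    and p :: "'s \<Rightarrow> real^'m \<Rightarrow> 's \<Rightarrow> real"
    and gp :: "'s \<Rightarrow> real^'m \<Rightarrow> 's \<Rightarrow> real^'m"
    and r :: "'s \<Rightarrow> real^'m \<Rightarrow> real"
    and gr :: "'s \<Rightarrow> real^'m \<Rightarrow> real^'m"
    and \<mu> :: "real^'n \<Rightarrow> 's \<Rightarrow> real^'m"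
    and D\<mu> :: "real^'n \<Rightarrow> 's \<Rightarrow> real^'n^'m"
  assumes beta: "\<beta> \<noteq> 0"
    and S_compact: "compact S"
    and p1_nonneg: "\<forall>s\<in>S. 0 \<le> p1 s"
    and p1_int: "(LINT s:S|lborel. p1 s) = 1"
    and p_nonneg: "\<forall>s\<in>S. \<forall>a. \<forall>s'\<in>S. 0 \<le> p s a s'"
    and p_int: "\<forall>s\<in>S. \<forall>a. (LINT s':S|lborel. p s a s') = 1"
    and gp_deriv: "\<forall>s\<in>S. \<forall>a. \<forall>s'\<in>S. ((\<lambda>a. p s a s') has_derivative (\<lambda>h. gp s a s' \<bullet> h)) (at a)"
    and gr_deriv: "\<forall>s\<in>S. \<forall>a. ((\<lambda>a. r s a) has_derivative (\<lambda>h. gr s a \<bullet> h)) (at a)"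
    and D\<mu>_deriv: "\<forall>\<theta>'. \<forall>s\<in>S. ((\<lambda>\<theta>. \<mu> \<theta> s) has_derivative (\<lambda>h. D\<mu> \<theta>' s *v h)) (at \<theta>')"
    and p_cont: "continuous_on (S \<times> UNIV \<times> S) (\<lambda>(s, a, s'). p s a s')"
    and gp_cont: "continuous_on (S \<times> UNIV \<times> S) (\<lambda>(s, a, s'). gp s a s')"
    and mu_cont: "continuous_on (UNIV \<times> S) (\<lambda>(\<theta>, s). \<mu> \<theta> s)"
    and D\<mu>_cont: "continuous_on (UNIV \<times> S) (\<lambda>(\<theta>, s). D\<mu> \<theta> s)"
    and r_cont: "continuous_on (S \<times> UNIV) (\<lambda>(s, a). r s a)"
    and gr_cont: "continuous_on (S \<times> UNIV) (\<lambda>(s, a). gr s a)"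
    and p1_cont: "continuous_on S p1"
begin

lemma continuous_on_p [continuous_intros]:
  "continuous_on X f \<Longrightarrow> continuous_on X g \<Longrightarrow> continuous_on X h \<Longrightarrow> f ` X \<subseteq> S \<Longrightarrow> h ` X \<subseteq> S
    \<Longrightarrow> continuous_on X (\<lambda>x. p (f x) (g x) (h x))"
  using continuous_on_compose_pair[OF p_cont, of X f "\<lambda>x. (g x, h x)"] by (auto intro!: continuous_on_Pair)

lemma continuous_on_gp [continuous_intros]:
  "continuous_on X f \<Longrightarrow> continuous_on X g \<Longrightarrow> continuous_on X h \<Longrightarrow> f ` X \<subseteq> S \<Longrightarrow> h ` X \<subseteq> S
    \<Longrightarrow> continuous_on X (\<lambda>x. gp (f x) (g x) (h x))"
  using continuous_on_compose_pair[OF gp_cont, of X f "\<lambda>x. (g x, h x)"] by (auto intro!: continuous_on_Pair)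

lemma continuous_on_r [continuous_intros]:
  "continuous_on X f \<Longrightarrow> continuous_on X g \<Longrightarrow> f ` X \<subseteq> S \<Longrightarrow> continuous_on X (\<lambda>x. r (f x) (g x))"
  using continuous_on_compose_pair[OF r_cont] by auto

lemma continuous_on_gr [continuous_intros]:
  "continuous_on X f \<Longrightarrow> continuous_on X g \<Longrightarrow> f ` X \<subseteq> S \<Longrightarrow> continuous_on X (\<lambda>x. gr (f x) (g x))"
  using continuous_on_compose_pair[OF gr_cont] by auto

lemma continuous_on_mu [continuous_intros]:
  "continuous_on X f \<Longrightarrow> continuous_on X g \<Longrightarrow> g ` X \<subseteq> S \<Longrightarrow> continuous_on X (\<lambda>x. \<mu> (f x) (g x))"
  using continuous_on_compose_pair[OF mu_cont] by auto

lemma continuous_on_Dmu [continuous_intros]: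
  "continuous_on X f \<Longrightarrow> continuous_on X g \<Longrightarrow> g ` X \<subseteq> S \<Longrightarrow> continuous_on X (\<lambda>x. D\<mu> (f x) (g x))"
  using continuous_on_compose_pair[OF D\<mu>_cont] by auto

lemma continuous_on_p1 [continuous_intros]:
  "continuous_on X f \<Longrightarrow> f ` X \<subseteq> S \<Longrightarrow> continuous_on X (\<lambda>x. p1 (f x))"
  by (rule continuous_on_compose2[OF p1_cont])

lemma S_sets: "S \<in> sets lborel"
  using S_compact by (simp add: borel_compact)

definition V :: "nat \<Rightarrow> real^'n \<Rightarrow> 's \<Rightarrow> real" where
  "V k \<theta> = Vtg \<beta> S p r (\<mu> \<theta>) k"

definition Z :: "nat \<Rightarrow> real^'n \<Rightarrow> 's \<Rightarrow> real^'m \<Rightarrow> real" where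
  "Z k \<theta> s a = (LINT s':S|lborel. p s a s' * exp (\<beta> * V k \<theta> s'))"

lemma V_0 [simp]: "V 0 \<theta> s = 0"
  by (simp add: V_def)

lemma V_Suc: "V (Suc k) \<theta> s = r s (\<mu> \<theta> s) + (1 / \<beta>) * ln (Z k \<theta> s (\<mu> \<theta> s))"
  by (simp add: V_def Z_def)

lemma Z_pos_if_continuous_V:
  assumes "continuous_on S (V k \<theta>)" "s \<in> S"
  shows "0 < Z k \<theta> s a"
  unfolding Z_def using assms p_nonneg p_int
  by (intro set_integral_density_pos S_compact) (auto intro!: continuous_intros)

lemma continuous_on_Z_if_continuous_V:
  assumes V: "continuous_on (UNIV \<times> S) (\<lambda>(\<theta>, s). V k \<theta> s)"
  shows "continuous_on (UNIV \<times> S \<times> UNIV) (\<lambda>(\<theta>, s, a). Z k \<theta> s a)"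
  unfolding Z_def split_beta
  by (rule continuous_on_set_integral_param[OF S_compact])
     (auto simp: split_beta intro!: continuous_intros continuous_on_compose_pair[OF V])

lemma continuous_on_V: "continuous_on (UNIV \<times> S) (\<lambda>(\<theta>, s). V k \<theta> s)"
proof (induction k)
  case 0
  then show ?case
    by (simp add: continuous_on_const)
next
  case (Suc k)
  have "continuous_on S (V k \<theta>)" for \<theta>
    using continuous_on_compose_pair[OF Suc, of S "\<lambda>_. \<theta>" "\<lambda>s. s"] by auto
  then have Z_nonzero: "\<forall>x\<in>UNIV \<times> S. Z k (fst x) (snd x) (\<mu> (fst x) (snd x)) \<noteq> 0"
    using Z_pos_if_continuous_V by (auto simp: less_le)
  have "continuous_on (UNIV \<times> S) (\<lambda>x. Z k (fst x) (snd x) (\<mu> (fst x) (snd x)))"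
    by (rule continuous_on_compose_pair[OF continuous_on_Z_if_continuous_V[OF Suc],
          of _ fst "\<lambda>x. (snd x, \<mu> (fst x) (snd x))", unfolded case_prod_conv])
       (auto intro!: continuous_intros)
  with Z_nonzero show ?case
    unfolding V_Suc split_beta using beta by (auto intro!: continuous_intros)
qed

lemma continuous_on_V_compose [continuous_intros]:
  "continuous_on X f \<Longrightarrow> continuous_on X g \<Longrightarrow> g ` X \<subseteq> S \<Longrightarrow> continuous_on X (\<lambda>x. V k (f x) (g x))"
  using continuous_on_compose_pair[OF continuous_on_V] by auto

lemma Z_pos: "s \<in> S \<Longrightarrow> 0 < Z k \<theta> s a"
  by (rule Z_pos_if_continuous_V) (auto intro!: continuous_intros)

lemma continuous_on_Z_compose [continuous_intros]:
  "continuous_on X f \<Longrightarrow> continuous_on X g \<Longrightarrow> continuous_on X h \<Longrightarrow> g ` X \<subseteq> S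
    \<Longrightarrow> continuous_on X (\<lambda>x. Z k (f x) (g x) (h x))"
  by (rule continuous_on_compose_pair[OF continuous_on_Z_if_continuous_V[OF continuous_on_V],
        of X f "\<lambda>x. (g x, h x)", unfolded case_prod_conv])
     (auto intro!: continuous_on_Pair)

definition DaZ :: "nat \<Rightarrow> real^'n \<Rightarrow> 's \<Rightarrow> real^'m \<Rightarrow> real^'m" where
  "DaZ k \<theta> s a = (LINT s':S|lborel. exp (\<beta> * V k \<theta> s') *\<^sub>R gp s a s')"

definition DaQ :: "nat \<Rightarrow> real^'n \<Rightarrow> 's \<Rightarrow> real^'m \<Rightarrow> real^'m" where
  "DaQ k \<theta> s a = gr s a + (1 / (\<beta> * Z k \<theta> s a)) *\<^sub>R DaZ k \<theta> s a"

definition Ptw :: "nat \<Rightarrow> real^'n \<Rightarrow> 's \<Rightarrow> real^'m \<Rightarrow> 's \<Rightarrow> real" where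
  "Ptw k \<theta> s a s' = p s a s' * exp (\<beta> * V k \<theta> s') / Z k \<theta> s a"

primrec DV :: "nat \<Rightarrow> real^'n \<Rightarrow> 's \<Rightarrow> real^'n" where
  "DV 0 \<theta> s = 0"
| "DV (Suc k) \<theta> s = DaQ k \<theta> s (\<mu> \<theta> s) v* D\<mu> \<theta> s
     + (LINT s':S|lborel. Ptw k \<theta> s (\<mu> \<theta> s) s' *\<^sub>R DV k \<theta> s')"

definition D\<theta>Z :: "nat \<Rightarrow> real^'n \<Rightarrow> 's \<Rightarrow> real^'m \<Rightarrow> real^'n" where
  "D\<theta>Z k \<theta> s a = (LINT s':S|lborel. (\<beta> * p s a s' * exp (\<beta> * V k \<theta> s')) *\<^sub>R DV k \<theta> s')"

lemma continuous_on_DaZ: "continuous_on (UNIV \<times> S \<times> UNIV) (\<lambda>(\<theta>, s, a). DaZ k \<theta> s a)"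
  unfolding DaZ_def split_beta
  by (rule continuous_on_set_integral_param[OF S_compact])
     (auto simp: split_beta intro!: continuous_intros)

lemma continuous_on_DaQ_compose [continuous_intros]:
  assumes "continuous_on X f" "continuous_on X g" "continuous_on X h" "g ` X \<subseteq> S"
  shows "continuous_on X (\<lambda>x. DaQ k (f x) (g x) (h x))"
proof -
  have "continuous_on X (\<lambda>x. DaZ k (f x) (g x) (h x))"
    by (rule continuous_on_compose_pair[OF continuous_on_DaZ, of X f "\<lambda>x. (g x, h x)",
          unfolded case_prod_conv])
       (use assms in \<open>auto intro!: continuous_on_Pair\<close>)
  moreover have "\<forall>x\<in>X. \<beta> * Z k (f x) (g x) (h x) \<noteq> 0"
    using assms(4) beta Z_pos by (fastforce simp: less_le)
  ultimately show ?thesis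
    unfolding DaQ_def using assms by (intro continuous_intros) auto
qed

lemma continuous_on_Ptw_compose [continuous_intros]:
  assumes "continuous_on X f" "continuous_on X g" "continuous_on X h" "continuous_on X g'"
    "g ` X \<subseteq> S" "g' ` X \<subseteq> S"
  shows "continuous_on X (\<lambda>x. Ptw k (f x) (g x) (h x) (g' x))"
proof -
  have "\<forall>x\<in>X. Z k (f x) (g x) (h x) \<noteq> 0"
    using assms(5) Z_pos by (fastforce simp: less_le)
  then show ?thesis
    unfolding Ptw_def using assms by (intro continuous_intros) auto
qed

lemma D\<theta>Z_eq:
  assumes "s \<in> S"
  shows "D\<theta>Z k \<theta> s a = (\<beta> * Z k \<theta> s a) *\<^sub>R (LINT s':S|lborel. Ptw k \<theta> s a s' *\<^sub>R DV k \<theta> s')"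
  using Z_pos[OF assms, of k \<theta> a]
  by (simp add: D\<theta>Z_def Ptw_def mult.assoc flip: set_integral_scaleR_right)

lemma has_derivative_Z:
  assumes V_deriv: "\<And>\<theta> s'. s' \<in> S \<Longrightarrow> ((\<lambda>\<theta>. V k \<theta> s') has_derivative (\<lambda>h. DV k \<theta> s' \<bullet> h)) (at \<theta>)"
    and DV_cont: "continuous_on (UNIV \<times> S) (\<lambda>(\<theta>, s). DV k \<theta> s)"
    and s: "s \<in> S"
  shows "((\<lambda>(\<theta>, a). Z k \<theta> s a) has_derivative
           (\<lambda>(h\<theta>, ha). D\<theta>Z k \<theta> s a \<bullet> h\<theta> + DaZ k \<theta> s a \<bullet> ha)) (at (\<theta>, a))"
proof -
  define grad where "grad x s' = ((\<beta> * p s (snd x) s' * exp (\<beta> * V k (fst x) s')) *\<^sub>R DV k (fst x) s',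
                             exp (\<beta> * V k (fst x) s') *\<^sub>R gp s (snd x) s')" for x s'
  have DV: "continuous_on X (\<lambda>x. DV k (f x) (g x))"
    if "continuous_on X f" "continuous_on X g" "g ` X \<subseteq> S" for X f g
    using continuous_on_compose_pair[OF DV_cont that(1,2)] that(3) by auto
  have integrand_deriv: "((\<lambda>x. p s (snd x) s' * exp (\<beta> * V k (fst x) s')) has_derivative (\<lambda>h. grad x s' \<bullet> h)) (at x)"
    if s': "s' \<in> S" for x s'
  proof -
    have "((\<lambda>x. p s (snd x) s') has_derivative (\<lambda>h. gp s (snd x) s' \<bullet> snd h)) (at x)"
      using has_derivative_compose[OF has_derivative_snd[OF has_derivative_ident]] gp_deriv s s' by fastforce
    moreover have "((\<lambda>x. V k (fst x) s') has_derivative (\<lambda>h. DV k (fst x) s' \<bullet> fst h)) (at x)"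
      using has_derivative_compose[OF has_derivative_fst[OF has_derivative_ident] V_deriv[OF s', of "fst x"]] by simp
    ultimately show ?thesis
      by (auto intro!: derivative_eq_intros simp: grad_def inner_prod_def algebra_simps)
  qed
  have "((\<lambda>x. Z k (fst x) s (snd x)) has_derivative (\<lambda>h. (LINT s':S|lborel. grad (\<theta>, a) s') \<bullet> h)) (at (\<theta>, a))"
    unfolding Z_def using s
    by (intro has_derivative_set_integral_param S_compact integrand_deriv)
       (auto simp: grad_def split_beta intro!: continuous_intros DV)
  moreover have "(LINT s':S|lborel. grad (\<theta>, a) s') = (D\<theta>Z k \<theta> s a, DaZ k \<theta> s a)"
    unfolding grad_def D\<theta>Z_def DaZ_def fst_conv snd_conv using s
    by (intro set_integral_Pair_continuous S_compact) (auto intro!: continuous_intros DV)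
  ultimately show ?thesis
    by (simp add: split_beta' inner_prod_def)
qed

lemma has_derivative_V_Suc:
  assumes V_deriv: "\<And>\<theta> s'. s' \<in> S \<Longrightarrow> ((\<lambda>\<theta>. V k \<theta> s') has_derivative (\<lambda>h. DV k \<theta> s' \<bullet> h)) (at \<theta>)"
    and DV_cont: "continuous_on (UNIV \<times> S) (\<lambda>(\<theta>, s). DV k \<theta> s)"
    and s: "s \<in> S"
  shows "((\<lambda>\<theta>. V (Suc k) \<theta> s) has_derivative (\<lambda>h. DV (Suc k) \<theta> s \<bullet> h)) (at \<theta>)"
proof -
  have \<mu>: "((\<lambda>\<theta>. \<mu> \<theta> s) has_derivative (\<lambda>h. D\<mu> \<theta> s *v h)) (at \<theta>)"
    using D\<mu>_deriv s by blast
  have Z: "((\<lambda>\<theta>. Z k \<theta> s (\<mu> \<theta> s)) has_derivative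
      (\<lambda>h. D\<theta>Z k \<theta> s (\<mu> \<theta> s) \<bullet> h + DaZ k \<theta> s (\<mu> \<theta> s) \<bullet> (D\<mu> \<theta> s *v h))) (at \<theta>)"
    using has_derivative_compose[OF has_derivative_Pair[OF has_derivative_ident \<mu>]
        has_derivative_Z[OF V_deriv DV_cont s]] by simp
  have r: "((\<lambda>\<theta>. r s (\<mu> \<theta> s)) has_derivative (\<lambda>h. gr s (\<mu> \<theta> s) \<bullet> (D\<mu> \<theta> s *v h))) (at \<theta>)"
    using has_derivative_compose[OF \<mu>] gr_deriv s by blast
  have Z_pos': "0 < Z k \<theta> s (\<mu> \<theta> s)"
    using Z_pos[OF s] .
  show ?thesis
    unfolding V_Suc
    by (rule has_derivative_eq_rhs[OF has_derivative_add[OF r has_derivative_mult_right[OF has_derivative_ln[OF Z_pos' Z]]]])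
       (use beta Z_pos' in \<open>auto simp: fun_eq_iff DaQ_def D\<theta>Z_eq[OF s]
          inner_add_left dot_lmul_matrix field_simps\<close>)
qed

lemma continuous_on_DV_Suc:
  assumes DV_cont: "continuous_on (UNIV \<times> S) (\<lambda>(\<theta>, s). DV k \<theta> s)"
  shows "continuous_on (UNIV \<times> S) (\<lambda>(\<theta>, s). DV (Suc k) \<theta> s)"
proof -
  have DV: "continuous_on X (\<lambda>x. DV k (f x) (g x))"
    if "continuous_on X f" "continuous_on X g" "g ` X \<subseteq> S" for X f g
    using continuous_on_compose_pair[OF DV_cont that(1,2)] that(3) by auto
  have "continuous_on (UNIV \<times> S)
      (\<lambda>x. LINT s':S|lborel. Ptw k (fst x) (snd x) (\<mu> (fst x) (snd x)) s' *\<^sub>R DV k (fst x) s')"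
    by (rule continuous_on_set_integral_param[OF S_compact])
       (auto simp: split_beta intro!: continuous_intros DV)
  then show ?thesis
    unfolding DV.simps split_beta by (auto intro!: continuous_intros)
qed

lemma has_derivative_V_and_continuous_DV:
  "(\<forall>\<theta>. \<forall>s\<in>S. ((\<lambda>\<theta>. V k \<theta> s) has_derivative (\<lambda>h. DV k \<theta> s \<bullet> h)) (at \<theta>))
   \<and> continuous_on (UNIV \<times> S) (\<lambda>(\<theta>, s). DV k \<theta> s)"
proof (induction k)
  case 0
  then show ?case
    by (simp add: continuous_on_const)
next
  case (Suc k)
  then show ?case
    using has_derivative_V_Suc[of k] continuous_on_DV_Suc[of k] by blast
qed

lemma has_derivative_V: "s \<in> S \<Longrightarrow> ((\<lambda>\<theta>. V k \<theta> s) has_derivative (\<lambda>h. DV k \<theta> s \<bullet> h)) (at \<theta>)"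
  using has_derivative_V_and_continuous_DV by blast

lemma continuous_on_DV_compose [continuous_intros]:
  "continuous_on X f \<Longrightarrow> continuous_on X g \<Longrightarrow> g ` X \<subseteq> S \<Longrightarrow> continuous_on X (\<lambda>x. DV k (f x) (g x))"
  using continuous_on_compose_pair[of UNIV S "\<lambda>\<theta> s. DV k \<theta> s"] has_derivative_V_and_continuous_DV by auto

lemma has_derivative_Q:
  assumes "s \<in> S"
  shows "((\<lambda>a. Qsoft \<beta> S p r (\<mu> \<theta>) T t s a) has_derivative (\<lambda>h. DaQ (T - t) \<theta> s a \<bullet> h)) (at a)"
proof -
  have Q_eq: "Qsoft \<beta> S p r (\<mu> \<theta>) T t s a' = r s a' + (1 / \<beta>) * ln (Z (T - t) \<theta> s a')" for a'
    by (simp add: Qsoft_def Vsoft_def Z_def V_def)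
  have Z: "((\<lambda>a. Z (T - t) \<theta> s a) has_derivative (\<lambda>h. DaZ (T - t) \<theta> s a \<bullet> h)) (at a)"
    using has_derivative_compose[OF has_derivative_Pair[OF has_derivative_const has_derivative_ident]
        has_derivative_Z[OF has_derivative_V has_derivative_V_and_continuous_DV[THEN conjunct2] assms]]
    by simp
  have r: "((\<lambda>a. r s a) has_derivative (\<lambda>h. gr s a \<bullet> h)) (at a)"
    using gr_deriv assms by blast
  show ?thesis
    unfolding Q_eq
    by (rule has_derivative_eq_rhs[OF has_derivative_add[OF r has_derivative_mult_right[OF has_derivative_ln[OF Z_pos[OF assms] Z]]]])
       (use beta Z_pos[OF assms] in \<open>auto simp: fun_eq_iff DaQ_def inner_add_left field_simps\<close>)
qed

definition Zinit :: "nat \<Rightarrow> real^'n \<Rightarrow> real" where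
  "Zinit k \<theta> = (LINT s:S|lborel. p1 s * exp (\<beta> * V k \<theta> s))"

lemma Zinit_pos: "0 < Zinit k \<theta>"
  unfolding Zinit_def using p1_nonneg p1_int
  by (intro set_integral_density_pos S_compact) (auto intro!: continuous_intros p1_cont)

abbreviation \<rho> :: "nat \<Rightarrow> real^'n \<Rightarrow> nat \<Rightarrow> 's \<Rightarrow> real" where
  "\<rho> T \<theta> \<equiv> rho_aux \<beta> S p1 p r (\<mu> \<theta>) T"

lemma rho_aux_0: "\<rho> T \<theta> 0 s = p1 s * exp (\<beta> * V T \<theta> s) / Zinit T \<theta>"
  by (simp add: Vsoft_def V_def Zinit_def)

lemma rho_aux_Suc: "\<rho> T \<theta> (Suc j) s' = (LINT s:S|lborel. \<rho> T \<theta> j s * Ptw (T - Suc j) \<theta> s (\<mu> \<theta> s) s')"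
  by (simp add: ptw_def Ptw_def Vsoft_def V_def Z_def)

lemma continuous_on_rho_aux: "continuous_on S (\<rho> T \<theta> j)"
proof (induction j)
  case 0
  show ?case
    unfolding rho_aux_0 using Zinit_pos[of T \<theta>] by (auto intro!: continuous_intros p1_cont)
next
  case (Suc j)
  show ?case
    unfolding rho_aux_Suc
    by (rule continuous_on_set_integral_param[OF S_compact])
       (auto simp: split_beta intro!: continuous_intros continuous_on_compose2[OF Suc])
qed

lemma has_derivative_J:
  "((\<lambda>\<theta>'. Jbeta \<beta> S p1 p r (\<mu> \<theta>') T) has_derivative
     (\<lambda>h. LINT s:S|lborel. \<rho> T \<theta> 0 s * (DV T \<theta> s \<bullet> h))) (at \<theta>)"
proof -
  define g where "g \<theta> s = (\<beta> * (p1 s * exp (\<beta> * V T \<theta> s))) *\<^sub>R DV T \<theta> s" for \<theta> s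
  have J_eq: "Jbeta \<beta> S p1 p r (\<mu> \<theta>') T = (1 / \<beta>) * ln (Zinit T \<theta>')" for \<theta>'
    by (simp add: Jbeta_def Vsoft_def Zinit_def V_def)
  have integrand_deriv: "((\<lambda>\<theta>. p1 s * exp (\<beta> * V T \<theta> s)) has_derivative (\<lambda>h. g \<theta> s \<bullet> h)) (at \<theta>)"
    if "s \<in> S" for \<theta> s
    by (rule has_derivative_eq_rhs[OF has_derivative_mult_right[OF
          has_derivative_exp[OF has_derivative_mult_right[OF has_derivative_V[OF that]]]]])
       (auto simp: g_def fun_eq_iff algebra_simps)
  have Zinit: "((\<lambda>\<theta>. Zinit T \<theta>) has_derivative (\<lambda>h. (LINT s:S|lborel. g \<theta> s) \<bullet> h)) (at \<theta>)"
    unfolding Zinit_def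
    by (intro has_derivative_set_integral_param S_compact integrand_deriv)
       (auto simp: g_def split_beta intro!: continuous_intros p1_cont)
  have inner_eq: "(LINT s:S|lborel. g \<theta> s) \<bullet> h = (\<beta> * Zinit T \<theta>) * (LINT s:S|lborel. \<rho> T \<theta> 0 s * (DV T \<theta> s \<bullet> h))" for h
  proof -
    have "set_integrable lborel S (g \<theta>)"
      unfolding g_def by (auto intro!: set_integrable_continuous_on_compact S_compact continuous_intros p1_cont)
    then have "(LINT s:S|lborel. g \<theta> s) \<bullet> h = (LINT s:S|lborel. g \<theta> s \<bullet> h)"
      by (rule set_integral_inner_left[symmetric])
    also have "\<dots> = (LINT s:S|lborel. (\<beta> * Zinit T \<theta>) * (\<rho> T \<theta> 0 s * (DV T \<theta> s \<bullet> h)))"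
      using Zinit_pos[of T \<theta>] by (intro set_lebesgue_integral_cong S_sets) (simp add: g_def rho_aux_0 del: rho_aux.simps)
    finally show ?thesis
      by simp
  qed
  show ?thesis
    unfolding J_eq
    by (rule has_derivative_eq_rhs[OF has_derivative_mult_right[OF has_derivative_ln[OF Zinit_pos Zinit]]])
       (use beta Zinit_pos[of T \<theta>] in \<open>auto simp: fun_eq_iff inner_eq field_simps\<close>)
qed

lemma inner_DV_Suc:
  assumes "s \<in> S"
  shows "DV (Suc k) \<theta> s \<bullet> h = DaQ k \<theta> s (\<mu> \<theta> s) \<bullet> (D\<mu> \<theta> s *v h)
    + (LINT s':S|lborel. Ptw k \<theta> s (\<mu> \<theta> s) s' * (DV k \<theta> s' \<bullet> h))"
proof -
  have "set_integrable lborel S (\<lambda>s'. Ptw k \<theta> s (\<mu> \<theta> s) s' *\<^sub>R DV k \<theta> s')"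
    using assms by (auto intro!: set_integrable_continuous_on_compact S_compact continuous_intros)
  then show ?thesis
    by (simp add: inner_add_left dot_lmul_matrix flip: set_integral_inner_left)
qed

lemma set_integral_rho_aux_DV:
  assumes "j + k = T"
  shows "(LINT s:S|lborel. \<rho> T \<theta> j s * (DV k \<theta> s \<bullet> h))
    = (\<Sum>t\<in>{Suc j..T}. LINT s:S|lborel. \<rho> T \<theta> (t - 1) s * (DaQ (T - t) \<theta> s (\<mu> \<theta> s) \<bullet> (D\<mu> \<theta> s *v h)))"
  using assms
proof (induction k arbitrary: j)
  case 0
  then show ?case
    by simp
next
  case (Suc k)
  define G where "G s = DaQ k \<theta> s (\<mu> \<theta> s) \<bullet> (D\<mu> \<theta> s *v h)" for s
  define K where "K s s' = Ptw k \<theta> s (\<mu> \<theta> s) s'" for s s'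
  have K: "continuous_on (S \<times> S) (\<lambda>(s, s'). K s s')"
    unfolding K_def split_beta by (auto intro!: continuous_intros)
  have "(LINT s:S|lborel. \<rho> T \<theta> j s * (DV (Suc k) \<theta> s \<bullet> h))
      = (LINT s:S|lborel. \<rho> T \<theta> j s * G s + \<rho> T \<theta> j s * (LINT s':S|lborel. K s s' * (DV k \<theta> s' \<bullet> h)))"
    by (intro set_lebesgue_integral_cong S_sets)
       (auto simp: inner_DV_Suc G_def K_def distrib_left simp del: DV.simps)
  also have "\<dots> = (LINT s:S|lborel. \<rho> T \<theta> j s * G s)
      + (LINT s:S|lborel. \<rho> T \<theta> j s * (LINT s':S|lborel. K s s' * (DV k \<theta> s' \<bullet> h)))"
    unfolding G_def K_def
    by (intro set_integral_add set_integrable_continuous_on_compact S_compact continuous_intros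
        continuous_on_rho_aux continuous_on_set_integral_param[where X=S])
       (auto simp: split_beta intro!: continuous_intros)
  also have "(LINT s:S|lborel. \<rho> T \<theta> j s * (LINT s':S|lborel. K s s' * (DV k \<theta> s' \<bullet> h)))
      = (LINT s':S|lborel. (LINT s:S|lborel. \<rho> T \<theta> j s * K s s') * (DV k \<theta> s' \<bullet> h))"
    by (intro set_integral_swap_continuous S_compact continuous_on_rho_aux K continuous_intros) auto
  also have "\<dots> = (LINT s:S|lborel. \<rho> T \<theta> (Suc j) s * (DV k \<theta> s \<bullet> h))"
    using Suc.prems by (simp add: rho_aux_Suc K_def flip: Suc.prems del: rho_aux.simps)
  also have "\<dots> = (\<Sum>t\<in>{Suc (Suc j)..T}. LINT s:S|lborel. \<rho> T \<theta> (t - 1) s * (DaQ (T - t) \<theta> s (\<mu> \<theta> s) \<bullet> (D\<mu> \<theta> s *v h)))"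
    using Suc.IH[of "Suc j"] Suc.prems by (simp del: rho_aux.simps)
  also have "(LINT s:S|lborel. \<rho> T \<theta> j s * G s) + \<dots>
      = (\<Sum>t\<in>{Suc j..T}. LINT s:S|lborel. \<rho> T \<theta> (t - 1) s * (DaQ (T - t) \<theta> s (\<mu> \<theta> s) \<bullet> (D\<mu> \<theta> s *v h)))"
  proof -
    have "T - Suc j = k" "Suc j \<le> T"
      using Suc.prems by auto
    then show ?thesis
      by (simp add: G_def Icc_eq_insert_lb_nat[of "Suc j" T] del: rho_aux.simps)
  qed
  finally show ?case .
qed

end

theorem theorem2:
  fixes \<beta> b L :: real and T :: nat
    and S :: "'s::euclidean_space set"
    and p1 :: "'s \<Rightarrow> real"
    and p :: "'s \<Rightarrow> real^'m \<Rightarrow> 's \<Rightarrow> real"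
    and gp :: "'s \<Rightarrow> real^'m \<Rightarrow> 's \<Rightarrow> real^'m"
    and r :: "'s \<Rightarrow> real^'m \<Rightarrow> real"
    and gr :: "'s \<Rightarrow> real^'m \<Rightarrow> real^'m"
    and \<mu> :: "real^'n \<Rightarrow> 's \<Rightarrow> real^'m"
    and D\<mu> :: "real^'n \<Rightarrow> 's \<Rightarrow> real^'n^'m"
    and \<theta> :: "real^'n"
  assumes beta: "\<beta> \<noteq> 0"
    and S_compact: "compact S"
    \<comment> \<open>densities\<close>
    and p1_nonneg: "\<forall>s\<in>S. 0 \<le> p1 s"
    and p1_int: "(LINT s:S|lborel. p1 s) = 1"
    and p_nonneg: "\<forall>s\<in>S. \<forall>a. \<forall>s'\<in>S. 0 \<le> p s a s'"
    and p_int: "\<forall>s\<in>S. \<forall>a. (LINT s':S|lborel. p s a s') = 1"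
    \<comment> \<open>gradients w.r.t. the action / the parameter\<close>
    and gp_deriv: "\<forall>s\<in>S. \<forall>a. \<forall>s'\<in>S. ((\<lambda>a. p s a s') has_derivative (\<lambda>h. gp s a s' \<bullet> h)) (at a)"
    and gr_deriv: "\<forall>s\<in>S. \<forall>a. ((\<lambda>a. r s a) has_derivative (\<lambda>h. gr s a \<bullet> h)) (at a)"
    and D\<mu>_deriv: "\<forall>\<theta>'. \<forall>s\<in>S. ((\<lambda>\<theta>. \<mu> \<theta> s) has_derivative (\<lambda>h. D\<mu> \<theta>' s *v h)) (at \<theta>')"
    \<comment> \<open>(D1) continuity\<close>
    and p_cont: "continuous_on (S \<times> UNIV \<times> S) (\<lambda>(s, a, s'). p s a s')"
    and gp_cont: "continuous_on (S \<times> UNIV \<times> S) (\<lambda>(s, a, s'). gp s a s')"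
    and mu_cont: "continuous_on (UNIV \<times> S) (\<lambda>(\<theta>, s). \<mu> \<theta> s)"
    and D\<mu>_cont: "continuous_on (UNIV \<times> S) (\<lambda>(\<theta>, s). D\<mu> \<theta> s)"
    and r_cont: "continuous_on (S \<times> UNIV) (\<lambda>(s, a). r s a)"
    and gr_cont: "continuous_on (S \<times> UNIV) (\<lambda>(s, a). gr s a)"
    and p1_cont: "continuous_on S p1"
    \<comment> \<open>(D2) bounds\<close>
    and p1_bd: "\<forall>s\<in>S. p1 s < b"
    and p_bd: "\<forall>s\<in>S. \<forall>a. \<forall>s'\<in>S. p s a s' < b"
    and r_bd: "\<forall>s\<in>S. \<forall>a. \<bar>r s a\<bar> < b"
    and gp_bd: "\<forall>s\<in>S. \<forall>a. \<forall>s'\<in>S. norm (gp s a s') < L"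
    and gr_bd: "\<forall>s\<in>S. \<forall>a. norm (gr s a) < L"
  shows "\<exists>G :: nat \<Rightarrow> 's \<Rightarrow> real^'m.
           (\<forall>t\<in>{1..T}. \<forall>s\<in>S.
              ((\<lambda>a. Qsoft \<beta> S p r (\<mu> \<theta>) T t s a) has_derivative (\<lambda>h. G t s \<bullet> h)) (at (\<mu> \<theta> s)))
         \<and> ((\<lambda>\<theta>'. Jbeta \<beta> S p1 p r (\<mu> \<theta>') T) has_derivative
              (\<lambda>h. \<Sum>t\<in>{1..T}. LINT s:S|lborel.
                      rho_star \<beta> S p1 p r (\<mu> \<theta>) T t s * (G t s \<bullet> (D\<mu> \<theta> s *v h)))) (at \<theta>)"
proof -
  interpret risk_sensitive_mdp \<beta> S p1 p gp r gr \<mu> D\<mu>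
    using assms by (simp add: risk_sensitive_mdp_def)
  show ?thesis
  proof (intro exI[of _ "\<lambda>t s. DaQ (T - t) \<theta> s (\<mu> \<theta> s)"] conjI ballI)
    show "((\<lambda>a. Qsoft \<beta> S p r (\<mu> \<theta>) T t s a) has_derivative (\<lambda>h. DaQ (T - t) \<theta> s (\<mu> \<theta> s) \<bullet> h))
        (at (\<mu> \<theta> s))" if "s \<in> S" for t s
      using has_derivative_Q[OF that] .
    show "((\<lambda>\<theta>'. Jbeta \<beta> S p1 p r (\<mu> \<theta>') T) has_derivative
        (\<lambda>h. \<Sum>t\<in>{1..T}. LINT s:S|lborel.
          rho_star \<beta> S p1 p r (\<mu> \<theta>) T t s * (DaQ (T - t) \<theta> s (\<mu> \<theta> s) \<bullet> (D\<mu> \<theta> s *v h)))) (at \<theta>)"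
      using set_integral_rho_aux_DV[of 0 T T \<theta>]
      by (intro has_derivative_eq_rhs[OF has_derivative_J]) (simp add: fun_eq_iff rho_star_def del: rho_aux.simps)
  qed
qed

end
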